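(* Let $D_8=\langle a,b\mid a^4=b^2=1,\ b^{-1}ab=a^{-1}\rangle$ be the dihedral group of order 8. The following d-identities form a basis of d-identities of $D_8$ (i.e. they all hold in $D_8$, and every group satisfying all of them is isomorphic to a section of $D_8$): (1) $\omega_8=\bigvee_{0\le i<j\le 8}(x_i=x_j)$; (2) $x^4=1$; (3) $(x_1^2=1)\vee(x_2^2=1)\vee(x_3^2=1)\vee(x_1=x_2)\vee(x_1=x_3)\vee(x_2=x_3)$; (4) $\Big[\bigvee_{i\ne j}x_i\in\langle x_j\rangle\Big]\vee\Big[\bigvee_{\sigma\in S_3}x_{\sigma(1)}\in\langle x_{\sigma(2)}x_{\sigma(3)}\rangle\Big]\vee\Big[\bigvee_{\sigma\in S_3}x_{\sigma(1)}x_{\sigma(2)}\in\langle x_{\sigma(2)}x_{\sigma(3)}\rangle\Big]$, with $i,j\in\{1,2,3\}$.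
   Context: A d-identity (disjunctive identity) is a universally quantified formula $\forall x_1\dots x_k\,[(f_1=1)\vee\dots\vee(f_n=1)]$ with the $f_i$ words in the free group on the variables; $u=v$ abbreviates $uv^{-1}=1$. A group satisfies it if it is true for all assignments. For a group $G$, $\mathrm{dvar}(G)$ is the class of groups satisfying every d-identity satisfied by $G$; for finite $G$ it is the class of groups isomorphic to sections (quotients of subgroups) of $G$. A set of d-identities is a basis of d-identities of $G$ if all its members hold in $G$ and every group satisfying them lies in $\mathrm{dvar}(G)$. Notation: "$u\in\langle v\rangle$" abbreviates $(u=1)\vee(u=v)\vee(u=v^2)\vee(u=v^3)$. *)

theory Defs
  imports "HOL-Algebra.Algebra" "HOL-Combinatorics.Permutations"
begin

text \<open>Concrete model of the dihedral group of order 8: the element (i,e) stands for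
  a^i b^e with 0 <= i < 4, 0 <= e < 2, so a = (1,0), b = (0,1).\<close>
definition D8 :: "(nat \<times> nat) monoid" where
  "D8 = \<lparr> carrier = {(i, e). i < 4 \<and> e < 2},
          monoid.mult = (\<lambda>(i, e) (j, f). ((i + (if e = 0 then j else 4 - j)) mod 4, (e + f) mod 2)),
          one = (0, 0) \<rparr>"

definition in_cyc :: "('a, 'b) monoid_scheme \<Rightarrow> 'a \<Rightarrow> 'a \<Rightarrow> bool" where
  "in_cyc G u v \<longleftrightarrow> u = \<one>\<^bsub>G\<^esub> \<or> u = v \<or> u = v [^]\<^bsub>G\<^esub> (2::nat) \<or> u = v [^]\<^bsub>G\<^esub> (3::nat)"

definition sat_d1 :: "('a, 'b) monoid_scheme \<Rightarrow> bool" where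
  "sat_d1 G \<longleftrightarrow> (\<forall>x :: nat \<Rightarrow> 'a. (\<forall>i\<le>8. x i \<in> carrier G) \<longrightarrow>
      (\<exists>i j. i < j \<and> j \<le> 8 \<and> x i = x j))"

definition sat_d2 :: "('a, 'b) monoid_scheme \<Rightarrow> bool" where
  "sat_d2 G \<longleftrightarrow> (\<forall>x\<in>carrier G. x [^]\<^bsub>G\<^esub> (4::nat) = \<one>\<^bsub>G\<^esub>)"

definition sat_d3 :: "('a, 'b) monoid_scheme \<Rightarrow> bool" where
  "sat_d3 G \<longleftrightarrow> (\<forall>x1\<in>carrier G. \<forall>x2\<in>carrier G. \<forall>x3\<in>carrier G.
      x1 [^]\<^bsub>G\<^esub> (2::nat) = \<one>\<^bsub>G\<^esub> \<or> x2 [^]\<^bsub>G\<^esub> (2::nat) = \<one>\<^bsub>G\<^esub> \<or>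
      x3 [^]\<^bsub>G\<^esub> (2::nat) = \<one>\<^bsub>G\<^esub> \<or> x1 = x2 \<or> x1 = x3 \<or> x2 = x3)"

definition sat_d4 :: "('a, 'b) monoid_scheme \<Rightarrow> bool" where
  "sat_d4 G \<longleftrightarrow> (\<forall>x :: nat \<Rightarrow> 'a. (\<forall>i\<in>{1,2,3}. x i \<in> carrier G) \<longrightarrow>
      (\<exists>i\<in>{1,2,3}. \<exists>j\<in>{1,2,3}. i \<noteq> j \<and> in_cyc G (x i) (x j))
    \<or> (\<exists>\<sigma>. \<sigma> permutes {1,2,3::nat} \<and>
          in_cyc G (x (\<sigma> 1)) (x (\<sigma> 2) \<otimes>\<^bsub>G\<^esub> x (\<sigma> 3)))
    \<or> (\<exists>\<sigma>. \<sigma> permutes {1,2,3::nat} \<and>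
          in_cyc G (x (\<sigma> 1) \<otimes>\<^bsub>G\<^esub> x (\<sigma> 2)) (x (\<sigma> 2) \<otimes>\<^bsub>G\<^esub> x (\<sigma> 3))))"

definition sat_basis :: "('a, 'b) monoid_scheme \<Rightarrow> bool" where
  "sat_basis G \<longleftrightarrow> sat_d1 G \<and> sat_d2 G \<and> sat_d3 G \<and> sat_d4 G"

definition is_section_of :: "('a, 'c) monoid_scheme \<Rightarrow> ('b, 'd) monoid_scheme \<Rightarrow> bool" where
  "is_section_of G H \<longleftrightarrow> (\<exists>K N. subgroup K H \<and> normal N (H\<lparr>carrier := K\<rparr>) \<and>
      G \<cong> (H\<lparr>carrier := K\<rparr> Mod N))"

end

theory Submission
  imports Defs "HOL-Library.Product_Lexorder"
begin

(* If some element a of G has a^2 \<noteq> 1, then a has order 4 by (2), and (3) applied to a, a^3 and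
   any third element g shows that every g outside {a, a^3} is an involution. Either G = <a> is
   cyclic of order 4, hence a subgroup of D8, or there is some b outside <a>; then b and ba are
   involutions, so a and b satisfy the defining relations of D8, the induced homomorphism from D8
   to G has trivial kernel, and (1), which says |G| \<le> 8, makes it onto. If G has exponent 2 it is
   elementary abelian, and (4) at three independent elements fails, so G is generated by two
   involutions and is a quotient of D8. That D8 satisfies (1)-(4) is a finite computation. *)

section \<open>The d-identities as conditions on elements\<close>

lemma permutes_123_triples:
  "(\<lambda>\<sigma>. (\<sigma> 1, \<sigma> 2, \<sigma> 3)) ` {\<sigma>. \<sigma> permutes {1, 2, 3 :: nat}} =
    {(1, 2, 3), (1, 3, 2), (2, 1, 3), (2, 3, 1), (3, 1, 2), (3, 2, 1)}"
    (is "?f ` ?perms = ?triples")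
proof
  have distinct_triple: "(p, q, r) \<in> ?triples"
    if "p \<in> {1, 2, 3}" "q \<in> {1, 2, 3}" "r \<in> {1, 2, 3}" "p \<noteq> q" "p \<noteq> r" "q \<noteq> r" for p q r :: nat
    using that by auto
  show "?f ` ?perms \<subseteq> ?triples"
  proof (rule image_subsetI)
    fix \<sigma> assume "\<sigma> \<in> ?perms"
    then have \<sigma>: "\<sigma> permutes {1, 2, 3}" by simp
    show "(\<sigma> 1, \<sigma> 2, \<sigma> 3) \<in> ?triples"
    proof (rule distinct_triple)
      show "\<sigma> 1 \<in> {1, 2, 3}" "\<sigma> 2 \<in> {1, 2, 3}" "\<sigma> 3 \<in> {1, 2, 3}"
        using permutes_in_image[OF \<sigma>] by simp_all
      show "\<sigma> 1 \<noteq> \<sigma> 2" "\<sigma> 1 \<noteq> \<sigma> 3" "\<sigma> 2 \<noteq> \<sigma> 3"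
        using permutes_inj[OF \<sigma>] by (simp_all add: inj_eq)
    qed
  qed
  have "(1, 2, 3) = ?f id"
    and "(1, 3, 2) = ?f (transpose 2 3)"
    and "(2, 1, 3) = ?f (transpose 1 2)"
    and "(2, 3, 1) = ?f (transpose 1 2 \<circ> transpose 2 3)"
    and "(3, 1, 2) = ?f (transpose 1 3 \<circ> transpose 2 3)"
    and "(3, 2, 1) = ?f (transpose 1 3)"
    by simp_all
  moreover have "id \<in> ?perms" "transpose 2 3 \<in> ?perms" "transpose 1 2 \<in> ?perms" "transpose 1 3 \<in> ?perms"
    "transpose 1 2 \<circ> transpose 2 3 \<in> ?perms" "transpose 1 3 \<circ> transpose 2 3 \<in> ?perms"
    by (simp_all add: permutes_swap_id permutes_compose)
  ultimately show "?triples \<subseteq> ?f ` ?perms"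
    by (simp only: insert_subset image_eqI empty_subsetI)
qed

lemma ex_permutes_123:
  "(\<exists>\<sigma>. \<sigma> permutes {1, 2, 3 :: nat} \<and> P (\<sigma> 1) (\<sigma> 2) (\<sigma> 3)) \<longleftrightarrow>
    P 1 2 3 \<or> P 1 3 2 \<or> P 2 1 3 \<or> P 2 3 1 \<or> P 3 1 2 \<or> P 3 2 1"
proof -
  have "(\<exists>\<sigma>. \<sigma> permutes {1, 2, 3 :: nat} \<and> P (\<sigma> 1) (\<sigma> 2) (\<sigma> 3)) \<longleftrightarrow>
      (\<exists>(p, q, r) \<in> (\<lambda>\<sigma>. (\<sigma> 1, \<sigma> 2, \<sigma> 3)) ` {\<sigma>. \<sigma> permutes {1, 2, 3 :: nat}}. P p q r)"
    by blast
  then show ?thesis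
    unfolding permutes_123_triples by simp
qed

(* As (u, v, w) runs over the orderings of (x, y, z), the pairs (u, v) cover the first bracket of
   (4) and the triples cover the two brackets indexed by S3. *)
definition d4_instance :: "('a, 'b) monoid_scheme \<Rightarrow> 'a \<Rightarrow> 'a \<Rightarrow> 'a \<Rightarrow> bool" where
  "d4_instance G x y z \<longleftrightarrow>
     (\<exists>(u, v, w) \<in> {(x, y, z), (x, z, y), (y, x, z), (y, z, x), (z, x, y), (z, y, x)}.
       in_cyc G u v \<or> in_cyc G u (v \<otimes>\<^bsub>G\<^esub> w) \<or> in_cyc G (u \<otimes>\<^bsub>G\<^esub> v) (v \<otimes>\<^bsub>G\<^esub> w))"

lemma d4_instance_swap12: "d4_instance G x y z \<Longrightarrow> d4_instance G y x z"
  and d4_instance_swap23: "d4_instance G x y z \<Longrightarrow> d4_instance G x z y"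
  unfolding d4_instance_def by (simp_all add: insert_commute)

lemma d4_instance_diag: "d4_instance G x x z"
  unfolding d4_instance_def in_cyc_def by auto

lemma sat_d4_iff: "sat_d4 G \<longleftrightarrow> (\<forall>x\<in>carrier G. \<forall>y\<in>carrier G. \<forall>z\<in>carrier G. d4_instance G x y z)"
proof -
  note permutations = sat_d4_def d4_instance_def
    ex_permutes_123[where P = "\<lambda>p q r. in_cyc G (x p) (x q \<otimes>\<^bsub>G\<^esub> x r)" for x]
    ex_permutes_123[where P = "\<lambda>p q r. in_cyc G (x p \<otimes>\<^bsub>G\<^esub> x q) (x q \<otimes>\<^bsub>G\<^esub> x r)" for x]
  show ?thesis
  proof (intro iffI ballI)
    fix x y z assume "sat_d4 G" "x \<in> carrier G" "y \<in> carrier G" "z \<in> carrier G"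
    then show "d4_instance G x y z"
      unfolding permutations
      by (elim allE[of _ "\<lambda>n. if n = 1 then x else if n = 2 then y else z"]) auto
  next
    assume "\<forall>x\<in>carrier G. \<forall>y\<in>carrier G. \<forall>z\<in>carrier G. d4_instance G x y z"
    then show "sat_d4 G"
      unfolding permutations by auto
  qed
qed

lemma linorder_wlog_3:
  fixes x y z :: "'a :: linorder"
  assumes swap12: "\<And>x y z. P x y z \<Longrightarrow> P y x z" and swap23: "\<And>x y z. P x y z \<Longrightarrow> P x z y"
    and diag: "\<And>x z. P x x z" and sorted: "\<And>x y z. x < y \<Longrightarrow> y < z \<Longrightarrow> P x y z"
  shows "P x y z"
proof -
  have increasing: "P x y z" if "x < y" for x y z
  proof (cases z x rule: linorder_cases)
    case less
    then show ?thesis using sorted[of z x y] that swap12 swap23 by blast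
  next
    case equal
    then show ?thesis using diag swap23 by blast
  next
    case greater
    then show ?thesis
    proof (cases z y rule: linorder_cases)
      case less
      then show ?thesis using sorted[of x z y] \<open>x < z\<close> swap23 by blast
    next
      case equal
      then show ?thesis using diag swap12 swap23 by blast
    next
      case greater
      then show ?thesis using sorted[of x y z] that by blast
    qed
  qed
  show ?thesis
    by (cases x y rule: linorder_cases) (use increasing diag swap12 in blast)+
qed

lemma sat_d1_iff: "sat_d1 G \<longleftrightarrow> finite (carrier G) \<and> card (carrier G) \<le> 8"
proof
  assume d1: "sat_d1 G"
  show "finite (carrier G) \<and> card (carrier G) \<le> 8"
  proof (rule ccontr)
    assume large: "\<not> (finite (carrier G) \<and> card (carrier G) \<le> 8)"
    obtain T where T: "T \<subseteq> carrier G" "finite T" "card T = 9"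
    proof (cases "finite (carrier G)")
      case True
      with large have "9 \<le> card (carrier G)" by simp
      then show ?thesis using obtain_subset_with_card_n that by metis
    next
      case False
      then show ?thesis using infinite_arbitrarily_large that by metis
    qed
    obtain x :: "nat \<Rightarrow> _" where x: "bij_betw x {0..<9} T"
      using ex_bij_betw_nat_finite[OF T(2)] T(3) by auto
    then have "\<forall>i\<le>8. x i \<in> carrier G"
      using T(1) bij_betwE by fastforce
    then obtain i j where "i < j" "j \<le> 8" "x i = x j"
      using d1 unfolding sat_d1_def by blast
    with x show False
      unfolding bij_betw_def by (auto dest: inj_onD)
  qed
next
  assume small: "finite (carrier G) \<and> card (carrier G) \<le> 8"
  show "sat_d1 G"
    unfolding sat_d1_def
  proof (intro allI impI)
    fix x :: "nat \<Rightarrow> _"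
    assume "\<forall>i\<le>8. x i \<in> carrier G"
    then have "x ` {..8} \<subseteq> carrier G"
      by (simp add: image_subset_iff)
    then have "card (x ` {..8}) \<le> card (carrier G)"
      using small card_mono by blast
    with small have "card (x ` {..8}) \<noteq> card {..8::nat}"
      by simp
    then have "\<not> inj_on x {..8}"
      using card_image by blast
    then obtain i j where "i \<le> 8" "j \<le> 8" "i \<noteq> j" "x i = x j"
      unfolding inj_on_def by auto
    then show "\<exists>i j. i < j \<and> j \<le> 8 \<and> x i = x j"
      by (metis linorder_neqE_nat)
  qed
qed

context monoid
begin

lemma nat_pow_2: "x \<in> carrier G \<Longrightarrow> x [^] (2::nat) = x \<otimes> x"
  by (simp add: numeral_eq_Suc)

lemma nat_pow_3: "x \<in> carrier G \<Longrightarrow> x [^] (3::nat) = x \<otimes> x \<otimes> x"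
  by (simp add: numeral_eq_Suc)

lemma nat_pow_4: "x \<in> carrier G \<Longrightarrow> x [^] (4::nat) = x \<otimes> x \<otimes> x \<otimes> x"
  by (simp add: numeral_eq_Suc)

lemma in_cyc_iff:
  "v \<in> carrier G \<Longrightarrow> in_cyc G u v \<longleftrightarrow> u = \<one> \<or> u = v \<or> u = v \<otimes> v \<or> u = v \<otimes> v \<otimes> v"
  by (simp add: in_cyc_def nat_pow_2 nat_pow_3)

end

section \<open>The dihedral group of order 8\<close>

lemma carrier_D8: "carrier D8 = {(i, e). i < 4 \<and> e < 2}"
  by (simp add: D8_def)

lemma carrier_D8_enum: "carrier D8 = {(0,0), (1,0), (2,0), (3,0), (0,1), (1,1), (2,1), (3,1)}"
proof -
  have "i < 4 \<longleftrightarrow> i \<in> {0, 1, 2, 3}" "e < 2 \<longleftrightarrow> e \<in> {0, 1}" for i e :: nat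
    by auto
  then show ?thesis
    unfolding carrier_D8 by auto
qed

lemma one_D8 [simp]: "\<one>\<^bsub>D8\<^esub> = (0, 0)"
  by (simp add: D8_def)

lemma mult_D8 [simp]:
  "(i, e) \<otimes>\<^bsub>D8\<^esub> (j, f) = ((i + (if e = 0 then j else 4 - j)) mod 4, (e + f) mod 2)"
  by (simp add: D8_def)

lemma group_D8: "group D8"
proof (rule groupI)
  show "x \<otimes>\<^bsub>D8\<^esub> y \<otimes>\<^bsub>D8\<^esub> z = x \<otimes>\<^bsub>D8\<^esub> (y \<otimes>\<^bsub>D8\<^esub> z)"
    if "x \<in> carrier D8" "y \<in> carrier D8" "z \<in> carrier D8" for x y z
    using that unfolding carrier_D8_enum by (elim insertE emptyE; simp)
  show "\<exists>y\<in>carrier D8. y \<otimes>\<^bsub>D8\<^esub> x = \<one>\<^bsub>D8\<^esub>" if "x \<in> carrier D8" for x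
    using that unfolding carrier_D8_enum by (elim insertE emptyE; simp)
qed (auto simp: carrier_D8)

interpretation D8: group D8
  by (rule group_D8)

lemma sat_d1_D8: "sat_d1 D8"
  by (simp add: sat_d1_iff carrier_D8_enum)

lemma sat_d2_D8: "sat_d2 D8"
  unfolding sat_d2_def carrier_D8_enum by (simp add: D8.nat_pow_4 carrier_D8)

lemma D8_square_eq_one: "x \<in> carrier D8 \<Longrightarrow> x \<otimes>\<^bsub>D8\<^esub> x = (0, 0) \<or> x \<in> {(1, 0), (3, 0)}"
  unfolding carrier_D8_enum by (elim insertE emptyE; simp)

lemma sat_d3_D8: "sat_d3 D8"
  unfolding sat_d3_def
proof (intro ballI)
  fix x y z assume "x \<in> carrier D8" "y \<in> carrier D8" "z \<in> carrier D8"
  then have "x [^]\<^bsub>D8\<^esub> (2::nat) = (0, 0) \<or> x \<in> {(1, 0), (3, 0)}"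
    "y [^]\<^bsub>D8\<^esub> (2::nat) = (0, 0) \<or> y \<in> {(1, 0), (3, 0)}"
    "z [^]\<^bsub>D8\<^esub> (2::nat) = (0, 0) \<or> z \<in> {(1, 0), (3, 0)}"
    by (simp_all only: D8.nat_pow_2 D8_square_eq_one)
  then show "x [^]\<^bsub>D8\<^esub> (2::nat) = \<one>\<^bsub>D8\<^esub> \<or> y [^]\<^bsub>D8\<^esub> (2::nat) = \<one>\<^bsub>D8\<^esub> \<or>
      z [^]\<^bsub>D8\<^esub> (2::nat) = \<one>\<^bsub>D8\<^esub> \<or> x = y \<or> x = z \<or> y = z"
    by auto
qed

lemma in_cyc_D8:
  assumes "v \<in> carrier D8"
  shows "in_cyc D8 u v \<longleftrightarrow> u = (0, 0) \<or> u = v \<or> v \<in> {(1, 0), (3, 0)} \<and> u \<in> {(1, 0), (2, 0), (3, 0)}"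
  using assms unfolding D8.in_cyc_iff[OF assms] carrier_D8_enum by (elim insertE emptyE; auto)

lemma sat_d4_D8: "sat_d4 D8"
proof -
  (* By the symmetry of (4), only the 56 strictly increasing triples are evaluated. *)
  have "x \<in> carrier D8 \<longrightarrow> y \<in> carrier D8 \<longrightarrow> z \<in> carrier D8 \<longrightarrow> d4_instance D8 x y z" for x y z
  proof (rule linorder_wlog_3[where P = "\<lambda>x y z. x \<in> carrier D8 \<longrightarrow> y \<in> carrier D8 \<longrightarrow>
      z \<in> carrier D8 \<longrightarrow> d4_instance D8 x y z"])
    show "x \<in> carrier D8 \<longrightarrow> y \<in> carrier D8 \<longrightarrow> z \<in> carrier D8 \<longrightarrow> d4_instance D8 x y z"
      if "x < y" "y < z" for x y z :: "nat \<times> nat"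
      using that unfolding carrier_D8_enum
      by (intro impI; elim insertE emptyE; clarsimp; simp add: d4_instance_def in_cyc_D8 carrier_D8)
  qed (blast intro: d4_instance_swap12 d4_instance_swap23 d4_instance_diag)+
  then show ?thesis
    unfolding sat_d4_iff by blast
qed

lemma sat_basis_D8: "sat_basis D8"
  unfolding sat_basis_def using sat_d1_D8 sat_d2_D8 sat_d3_D8 sat_d4_D8 by blast

section \<open>Sections of D8 given by generators and relations\<close>

definition D8_rotations :: "(nat \<times> nat) set" where
  "D8_rotations = {(i, 0) | i. i < 4}"

lemma subgroup_D8_rotations: "subgroup D8_rotations D8"
proof (rule D8.subgroupI)
  show "D8_rotations \<subseteq> carrier D8"
    by (auto simp: D8_rotations_def carrier_D8)
  have "(0, 0) \<in> D8_rotations"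
    by (simp add: D8_rotations_def)
  then show "D8_rotations \<noteq> {}"
    by blast
  show "a \<otimes>\<^bsub>D8\<^esub> b \<in> D8_rotations" if "a \<in> D8_rotations" "b \<in> D8_rotations" for a b
    using that by (auto simp: D8_rotations_def)
  show "inv\<^bsub>D8\<^esub> a \<in> D8_rotations" if rotation: "a \<in> D8_rotations" for a
  proof -
    obtain i where i: "a = (i, 0)" "i < 4"
      using rotation by (auto simp: D8_rotations_def)
    have "inv\<^bsub>D8\<^esub> (i, 0) = ((4 - i) mod 4, 0)"
      using i by (intro D8.inv_equality) (auto simp: carrier_D8 mod_add_left_eq)
    then show ?thesis
      using i by (simp add: D8_rotations_def)
  qed
qed

lemma is_section_of_image:
  assumes H: "group H" and G: "group G" and K: "subgroup K H"
    and \<phi>: "\<phi> \<in> hom (H\<lparr>carrier := K\<rparr>) G" and onto: "\<phi> ` K = carrier G"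
  shows "is_section_of G H"
proof -
  let ?K = "H\<lparr>carrier := K\<rparr>"
  interpret \<phi>: group_hom ?K G \<phi>
    unfolding group_hom_def group_hom_axioms_def
    using subgroup.subgroup_is_group[OF K H] G \<phi> by blast
  have "?K Mod kernel ?K G \<phi> \<cong> G"
    using \<phi>.FactGroup_iso onto by simp
  then have "G \<cong> ?K Mod kernel ?K G \<phi>"
    by (rule group.iso_sym[OF normal.factorgroup_is_group[OF \<phi>.normal_kernel]])
  then show ?thesis
    unfolding is_section_of_def using K \<phi>.normal_kernel by blast
qed

context group
begin

lemma nat_pow_mod_eq:
  assumes x: "x \<in> carrier G" and "x [^] m = \<one>"
  shows "x [^] (n::nat) = x [^] (n mod m)"
proof -
  have "(x [^] m) [^] (n div m) \<otimes> x [^] (n mod m) = x [^] n"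
    using x by (simp add: nat_pow_pow nat_pow_mult)
  then show ?thesis
    using assms by simp
qed

lemma conj_nat_pow:
  assumes a: "a \<in> carrier G" and b: "b \<in> carrier G" and conj: "b \<otimes> a = a [^] (k::nat) \<otimes> b"
  shows "b \<otimes> a [^] (j::nat) = a [^] (k * j) \<otimes> b"
proof (induction j)
  case 0
  then show ?case using b by simp
next
  case (Suc j)
  have "b \<otimes> a [^] Suc j = (b \<otimes> a [^] j) \<otimes> a"
    using a b by (simp add: m_assoc)
  also have "\<dots> = a [^] (k * j) \<otimes> (a [^] k \<otimes> b)"
    using Suc a b conj by (simp add: m_assoc)
  also have "\<dots> = a [^] (k * Suc j) \<otimes> b"
    using a b by (simp add: m_assoc[symmetric] nat_pow_mult add.commute)
  finally show ?case .
qed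

lemma D8_presentation_hom:
  assumes a: "a \<in> carrier G" and b: "b \<in> carrier G"
    and a4: "a [^] (4::nat) = \<one>" and b2: "b \<otimes> b = \<one>" and conj: "b \<otimes> a = a [^] (3::nat) \<otimes> b"
  shows "(\<lambda>(i, e). a [^] i \<otimes> b [^] e) \<in> hom D8 G"
proof (rule homI)
  fix x y assume "x \<in> carrier D8" "y \<in> carrier D8"
  then obtain i e j f where xy: "x = (i, e)" "y = (j, f)" and "i < 4" "j < 4" "e < 2" "f < 2"
    by (auto simp: carrier_D8)
  have b_pow: "b [^] (n::nat) = b [^] (n mod 2)" for n
    using b b2 by (simp add: nat_pow_mod_eq nat_pow_2)
  have a_pow: "a [^] (n::nat) = a [^] (n mod 4)" for n
    using a a4 by (rule nat_pow_mod_eq)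
  consider "e = 0" | "e = 1"
    using \<open>e < 2\<close> by linarith
  then show "(\<lambda>(i, e). a [^] i \<otimes> b [^] e) (x \<otimes>\<^bsub>D8\<^esub> y) =
      (\<lambda>(i, e). a [^] i \<otimes> b [^] e) x \<otimes> (\<lambda>(i, e). a [^] i \<otimes> b [^] e) y"
  proof cases
    case 1
    have "a [^] i \<otimes> b [^] e \<otimes> (a [^] j \<otimes> b [^] f) = a [^] (i + j) \<otimes> b [^] f"
      using 1 a b by (simp add: m_assoc[symmetric] nat_pow_mult)
    then show ?thesis
      using 1 xy \<open>f < 2\<close> a_pow[of "i + j"] by simp
  next
    case 2
    have "a [^] i \<otimes> b [^] e \<otimes> (a [^] j \<otimes> b [^] f) = a [^] i \<otimes> (b \<otimes> a [^] j) \<otimes> b [^] f"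
      using 2 a b by (simp add: m_assoc)
    also have "\<dots> = a [^] i \<otimes> a [^] (3 * j) \<otimes> (b \<otimes> b [^] f)"
      using a b by (simp add: conj_nat_pow[OF a b conj] m_assoc)
    also have "\<dots> = a [^] (i + 3 * j) \<otimes> (b \<otimes> b [^] f)"
      using a b by (simp add: nat_pow_mult)
    also have "\<dots> = a [^] ((i + (4 - j)) mod 4) \<otimes> b [^] ((1 + f) mod 2)"
    proof -
      have "i + (4 - j) + 4 * j = i + 3 * j + 4"
        using \<open>j < 4\<close> by simp
      then have "(i + (4 - j) + 4 * j) mod 4 = (i + 3 * j + 4) mod 4"
        by (rule arg_cong)
      then have "(i + 3 * j) mod 4 = (i + (4 - j)) mod 4"
        by simp
      moreover have "b \<otimes> b [^] f = b [^] ((1 + f) mod 2)"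
        using b_pow[of "Suc f"] nat_pow_Suc2[OF b, of f] by simp
      ultimately show ?thesis
        using a_pow[of "i + 3 * j"] by simp
    qed
    finally show ?thesis
      using 2 xy by simp
  qed
qed (use a b in \<open>auto simp: carrier_D8\<close>)

lemma D8_rotations_hom:
  assumes a: "a \<in> carrier G" and a4: "a [^] (4::nat) = \<one>"
  shows "(\<lambda>(i, e). a [^] i) \<in> hom (D8\<lparr>carrier := D8_rotations\<rparr>) G"
proof (rule homI)
  fix x y assume "x \<in> carrier (D8\<lparr>carrier := D8_rotations\<rparr>)" "y \<in> carrier (D8\<lparr>carrier := D8_rotations\<rparr>)"
  then obtain i j where "x = (i, 0)" "y = (j, 0)"
    by (auto simp: D8_rotations_def)
  then show "(\<lambda>(i, e). a [^] i) (x \<otimes>\<^bsub>D8\<lparr>carrier := D8_rotations\<rparr>\<^esub> y) =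
      (\<lambda>(i, e). a [^] i) x \<otimes> (\<lambda>(i, e). a [^] i) y"
    using nat_pow_mod_eq[OF a a4, of "i + j"] a by (simp add: nat_pow_mult)
qed (use a in auto)

section \<open>Groups satisfying the basis\<close>

lemma ord_eq_4:
  assumes a: "a \<in> carrier G" and a4: "a [^] (4::nat) = \<one>" and a2: "a \<otimes> a \<noteq> \<one>"
  shows "ord a = 4"
proof -
  have "ord a dvd 4" "\<not> ord a dvd 2"
    using a a4 a2 by (simp_all add: pow_eq_id[symmetric] nat_pow_2)
  moreover have "ord a \<in> {1, 2, 3, 4}"
    using dvd_imp_le[OF \<open>ord a dvd 4\<close>] \<open>ord a dvd 4\<close> by (auto simp: le_Suc_eq numeral_eq_Suc)
  ultimately show ?thesis
    by auto
qed

lemma sat_d3_square_eq_one: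
  assumes d3: "sat_d3 G" and a: "a \<in> carrier G" "a [^] (4::nat) = \<one>" "a \<otimes> a \<noteq> \<one>"
    and g: "g \<in> carrier G" "g \<noteq> a" "g \<noteq> a [^] (3::nat)"
  shows "g \<otimes> g = \<one>"
proof -
  have a3: "a [^] (3::nat) \<in> carrier G"
    using a by simp
  have "(a [^] (3::nat)) [^] (2::nat) = a [^] (2::nat)"
    using a nat_pow_mod_eq[OF a(1,2), of 6] by (simp add: nat_pow_pow)
  then have "(a [^] (3::nat)) [^] (2::nat) \<noteq> \<one>"
    using a by (simp add: nat_pow_2)
  moreover have "a \<noteq> a [^] (3::nat)"
    using a by (auto simp: nat_pow_3 m_assoc)
  ultimately show ?thesis
    using d3 a a3 g unfolding sat_d3_def by (metis nat_pow_2)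
qed

lemma D8_presentation_hom_inj:
  assumes a: "a \<in> carrier G" "ord a = 4" and b: "b \<in> carrier G" "\<forall>n::nat. b \<noteq> a [^] n"
    and hom: "(\<lambda>(i, e). a [^] i \<otimes> b [^] e) \<in> hom D8 G"
  shows "inj_on (\<lambda>(i, e). a [^] i \<otimes> b [^] e) (carrier D8)"
proof -
  interpret \<phi>: group_hom D8 G "\<lambda>(i, e). a [^] i \<otimes> b [^] e"
    by (simp add: group_hom_def group_hom_axioms_def group_D8 is_group hom)
  have "x = (0, 0)" if x_D8: "x \<in> carrier D8" and x_ker: "(\<lambda>(i, e). a [^] i \<otimes> b [^] e) x = \<one>" for x
  proof -
    obtain i e where x: "x = (i, e)" "i < 4" "e < 2"
      using x_D8 by (auto simp: carrier_D8)
    have "e \<noteq> 1"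
    proof
      assume "e = 1"
      then have "a [^] i \<otimes> b = \<one>"
        using x_ker x b by simp
      have "a [^] (3 * i) \<otimes> a [^] i = \<one>"
        using a by (simp add: nat_pow_mult pow_eq_id)
      then have "b = a [^] (3 * i) \<otimes> a [^] i \<otimes> b"
        using b by simp
      also have "\<dots> = a [^] (3 * i)"
        using a b \<open>a [^] i \<otimes> b = \<one>\<close> by (simp add: m_assoc)
      finally show False
        using b by blast
    qed
    then have "e = 0"
      using x by simp
    then have "a [^] i = \<one>"
      using x_ker x a by simp
    then have "i = 0"
      using a x by (auto simp: pow_eq_id)
    then show ?thesis
      using x \<open>e = 0\<close> by simp
  qed
  then show ?thesis
    by (intro \<phi>.trivial_ker_imp_inj) (auto simp: kernel_def carrier_D8)
qed

lemma sat_d3_dihedral_relations: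
  assumes d3: "sat_d3 G" and a: "a \<in> carrier G" "a [^] (4::nat) = \<one>" "a \<otimes> a \<noteq> \<one>"
    and b: "b \<in> carrier G" "\<forall>n::nat. b \<noteq> a [^] n"
  shows "b \<otimes> b = \<one>" and "b \<otimes> a = a [^] (3::nat) \<otimes> b"
proof -
  have inv_a: "inv a = a [^] (3::nat)"
    using a nat_pow_mult[OF a(1), of 3 1] by (intro inv_equality) simp_all
  show b2: "b \<otimes> b = \<one>"
    using b(2)[rule_format, of 1] b(2)[rule_format, of 3] a
    by (intro sat_d3_square_eq_one[OF d3 a b(1)]) simp_all
  have ba_not_pow: "b \<otimes> a \<noteq> a [^] n" for n :: nat
  proof
    assume ba: "b \<otimes> a = a [^] n"
    have "b = b \<otimes> a \<otimes> inv a"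
      using a b by (simp add: m_assoc)
    also have "\<dots> = a [^] (n + 3)"
      using a ba inv_a by (simp add: nat_pow_mult)
    finally show False
      using b(2) by blast
  qed
  have "(b \<otimes> a) \<otimes> (b \<otimes> a) = \<one>"
    using ba_not_pow[of 1] ba_not_pow[of 3] a b by (intro sat_d3_square_eq_one[OF d3 a]) simp_all
  then have "b \<otimes> a = inv (b \<otimes> a)"
    using a b by (simp add: inv_equality)
  also have "\<dots> = a [^] (3::nat) \<otimes> b"
    using a b b2 inv_a by (simp add: inv_mult_group inv_equality)
  finally show "b \<otimes> a = a [^] (3::nat) \<otimes> b" .
qed

lemma is_section_of_D8_if_cyclic:
  assumes a: "a \<in> carrier G" and a4: "a [^] (4::nat) = \<one>" and cyclic: "\<forall>g\<in>carrier G. \<exists>n::nat. g = a [^] n"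
  shows "is_section_of G D8"
proof -
  have "(\<lambda>(i, e). a [^] i) ` D8_rotations = carrier G"
  proof
    show "(\<lambda>(i, e). a [^] i) ` D8_rotations \<subseteq> carrier G"
      using a by (auto simp: D8_rotations_def)
    show "carrier G \<subseteq> (\<lambda>(i, e). a [^] i) ` D8_rotations"
    proof
      fix g assume "g \<in> carrier G"
      then obtain n :: nat where "g = a [^] (n mod 4)"
        using cyclic nat_pow_mod_eq[OF a a4] by metis
      then show "g \<in> (\<lambda>(i, e). a [^] i) ` D8_rotations"
        by (intro image_eqI[of _ _ "(n mod 4, 0)"]) (auto simp: D8_rotations_def)
    qed
  qed
  then show ?thesis
    using is_section_of_image[OF group_D8 is_group subgroup_D8_rotations D8_rotations_hom[OF a a4]]
    by blast
qed

lemma is_section_of_D8_if_not_exponent_2: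
  assumes d1: "sat_d1 G" and d2: "sat_d2 G" and d3: "sat_d3 G"
    and a: "a \<in> carrier G" and a2: "a \<otimes> a \<noteq> \<one>"
  shows "is_section_of G D8"
proof -
  have a4: "a [^] (4::nat) = \<one>"
    using d2 a unfolding sat_d2_def by blast
  show ?thesis
  proof (cases "\<forall>g\<in>carrier G. \<exists>n::nat. g = a [^] n")
    case True
    then show ?thesis
      using is_section_of_D8_if_cyclic[OF a a4] by blast
  next
    case False
    then obtain b where b: "b \<in> carrier G" "\<forall>n::nat. b \<noteq> a [^] n"
      by blast
    let ?\<phi> = "\<lambda>(i :: nat, e :: nat). a [^] i \<otimes> b [^] e"
    have hom: "?\<phi> \<in> hom D8 G"
      using D8_presentation_hom[OF a b(1) a4 sat_d3_dihedral_relations[OF d3 a a4 a2 b]] .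
    then have sub: "?\<phi> ` carrier D8 \<subseteq> carrier G"
      by (rule hom_carrier)
    have "card (?\<phi> ` carrier D8) = 8"
      using card_image[OF D8_presentation_hom_inj[OF a ord_eq_4[OF a a4 a2] b hom]]
      by (simp add: carrier_D8_enum)
    moreover have "finite (carrier G)" "card (carrier G) \<le> 8"
      using d1 by (simp_all add: sat_d1_iff)
    ultimately have "?\<phi> ` carrier D8 = carrier G"
      using card_subset_eq[OF _ sub] card_mono[OF _ sub] by (metis le_antisym)
    then show ?thesis
      using is_section_of_image[OF group_D8 is_group D8.subgroup_self] hom by simp
  qed
qed

lemma exponent_2_inv: "\<forall>g\<in>carrier G. g \<otimes> g = \<one> \<Longrightarrow> x \<in> carrier G \<Longrightarrow> inv x = x"
  by (simp add: inv_equality)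

lemma exponent_2_comm:
  assumes sq: "\<forall>g\<in>carrier G. g \<otimes> g = \<one>" and x: "x \<in> carrier G" and y: "y \<in> carrier G"
  shows "x \<otimes> y = y \<otimes> x"
proof -
  have "x \<otimes> y = inv (x \<otimes> y)"
    using exponent_2_inv[OF sq, of "x \<otimes> y"] x y by simp
  also have "\<dots> = inv y \<otimes> inv x"
    using x y by (rule inv_mult_group)
  also have "\<dots> = y \<otimes> x"
    using exponent_2_inv[OF sq] x y by simp
  finally show ?thesis .
qed

lemma d4_instance_exponent_2_dependent:
  assumes sq: "\<forall>g\<in>carrier G. g \<otimes> g = \<one>"
    and xyz: "x \<in> carrier G" "y \<in> carrier G" "z \<in> carrier G" and d4: "d4_instance G x y z"
  shows "x = \<one> \<or> y = \<one> \<or> z = \<one> \<or> x = y \<or> x = z \<or> y = z \<or> z = x \<otimes> y"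
proof -
  obtain u v w where arrangement: "(u, v, w) \<in> {(x, y, z), (x, z, y), (y, x, z), (y, z, x), (z, x, y), (z, y, x)}"
    and holds: "in_cyc G u v \<or> in_cyc G u (v \<otimes> w) \<or> in_cyc G (u \<otimes> v) (v \<otimes> w)"
    using d4 unfolding d4_instance_def by blast
  have uvw: "u \<in> carrier G" "v \<in> carrier G" "w \<in> carrier G"
    using arrangement xyz by auto
  have in_cyc_exponent_2: "in_cyc G s t \<longleftrightarrow> s = \<one> \<or> s = t" if "t \<in> carrier G" for s t
    using that sq by (auto simp: in_cyc_iff)
  have product_one: "u \<otimes> v = \<one> \<longleftrightarrow> u = v"
    using uvw sq by (metis exponent_2_inv inv_equality)
  have product_shift: "u \<otimes> v = v \<otimes> w \<longleftrightarrow> u = w"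
    using sq uvw by (simp add: exponent_2_comm[of u v])
  from holds consider "in_cyc G u v" | "in_cyc G u (v \<otimes> w)" | "in_cyc G (u \<otimes> v) (v \<otimes> w)"
    by blast
  then have "u = \<one> \<or> u = v \<or> u = w \<or> u = v \<otimes> w"
  proof cases
    case 1
    then show ?thesis using in_cyc_exponent_2[OF uvw(2)] by auto
  next
    case 2
    then show ?thesis using in_cyc_exponent_2[of "v \<otimes> w" u] uvw by auto
  next
    case 3
    then show ?thesis using in_cyc_exponent_2[of "v \<otimes> w" "u \<otimes> v"] uvw product_one product_shift by auto
  qed
  moreover have "w = u \<otimes> v \<and> w = v \<otimes> u \<and> v = u \<otimes> w \<and> v = w \<otimes> u \<and> u = w \<otimes> v"
    if "u = v \<otimes> w"
  proof -
    have "v \<otimes> u = w" "u \<otimes> w = v"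
      using that sq uvw by (simp_all add: m_assoc[symmetric]) (simp add: m_assoc)
    then show ?thesis
      using that uvw exponent_2_comm[OF sq] by metis
  qed
  ultimately show ?thesis
    using arrangement by auto
qed

lemma exponent_2_generated_by_two:
  assumes d4: "sat_d4 G" and sq: "\<forall>g\<in>carrier G. g \<otimes> g = \<one>"
  shows "\<exists>a\<in>carrier G. \<exists>b\<in>carrier G. carrier G \<subseteq> {\<one>, a, b, a \<otimes> b}"
proof (rule ccontr)
  assume none: "\<not> ?thesis"
  then obtain a where a: "a \<in> carrier G" "a \<noteq> \<one>"
    by (metis insertCI one_closed r_one subsetI)
  with none obtain b where b: "b \<in> carrier G" "b \<notin> {\<one>, a}"
    by (metis insertCI one_closed r_one subsetI)
  with none a obtain c where c: "c \<in> carrier G" "c \<notin> {\<one>, a, b, a \<otimes> b}"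
    by blast
  have "d4_instance G a b c"
    using d4 a b c by (simp add: sat_d4_iff)
  then show False
    using d4_instance_exponent_2_dependent[OF sq a(1) b(1) c(1)] a b c by auto
qed

lemma is_section_of_D8_if_exponent_2:
  assumes d4: "sat_d4 G" and sq: "\<forall>g\<in>carrier G. g \<otimes> g = \<one>"
  shows "is_section_of G D8"
proof -
  obtain a b where a: "a \<in> carrier G" and b: "b \<in> carrier G" and cover: "carrier G \<subseteq> {\<one>, a, b, a \<otimes> b}"
    using exponent_2_generated_by_two[OF d4 sq] by blast
  let ?\<phi> = "\<lambda>(i :: nat, e :: nat). a [^] i \<otimes> b [^] e"
  have "a [^] (4::nat) = \<one>"
    using a sq by (simp add: nat_pow_4)
  moreover have "b \<otimes> a = a [^] (3::nat) \<otimes> b"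
    using a b sq by (simp add: nat_pow_3 exponent_2_comm)
  ultimately have hom: "?\<phi> \<in> hom D8 G"
    using a b sq by (intro D8_presentation_hom) simp_all
  have "?\<phi> ` carrier D8 = carrier G"
  proof
    show "?\<phi> ` carrier D8 \<subseteq> carrier G"
      using hom by (rule hom_carrier)
    have "{\<one>, a, b, a \<otimes> b} = ?\<phi> ` {(0, 0), (1, 0), (0, 1), (1, 1)}"
      using a b by simp
    also have "\<dots> \<subseteq> ?\<phi> ` carrier D8"
      by (intro image_mono) (simp add: carrier_D8)
    finally show "carrier G \<subseteq> ?\<phi> ` carrier D8"
      using cover by blast
  qed
  then show ?thesis
    using is_section_of_image[OF group_D8 is_group D8.subgroup_self] hom by simp
qed

end

theorem proposition1:
  fixes G :: "('a, 'b) monoid_scheme"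
  shows "(group D8 \<and> sat_basis D8) \<and> (group G \<and> sat_basis G \<longrightarrow> is_section_of G D8)"
proof (intro conjI impI)
  show "group D8"
    by (rule group_D8)
  show "sat_basis D8"
    by (rule sat_basis_D8)
  assume G: "group G \<and> sat_basis G"
  then interpret group G
    by simp
  have d1: "sat_d1 G" and d2: "sat_d2 G" and d3: "sat_d3 G" and d4: "sat_d4 G"
    using G by (simp_all add: sat_basis_def)
  show "is_section_of G D8"
  proof (cases "\<forall>g\<in>carrier G. g \<otimes>\<^bsub>G\<^esub> g = \<one>\<^bsub>G\<^esub>")
    case True
    then show ?thesis
      using is_section_of_D8_if_exponent_2[OF d4] by blast
  next
    case False
    then obtain a where "a \<in> carrier G" "a \<otimes>\<^bsub>G\<^esub> a \<noteq> \<one>\<^bsub>G\<^esub>"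
      by blast
    then show ?thesis
      using is_section_of_D8_if_not_exponent_2[OF d1 d2 d3] by blast
  qed
qed

end
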